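(* Let $g_0$ be a positive continuous function on $(0,\infty)$, $s>0$, and let $b_0$ be a smooth function on $(s,\infty)$ such that for every $h>0$ there is $C>0$ (resp. there are $h,C>0$) with $$|\partial^kb_0(\lambda)|\le Ch^kA_kg_0(\lambda)\langle\lambda\rangle^{-\rho k},\quad\lambda>s,\ k\in\mathbb N.$$ Then $b(x)=b_0(|x|)$ is smooth on $\{x\in\mathbb R^d:|x|>s\}$ and for every $h>0$ there is $C>0$ (resp. there are $h,C>0$) with $$|\partial^\alpha b(x)|\le Ch^{|\alpha|}A_\alpha g_0(|x|)\langle x\rangle^{-\rho|\alpha|},\quad |x|>s,\ \alpha\in\mathbb N^d.$$
   Context: $A_p$ is a sequence of positive numbers with $A_0=A_1=1$ satisfying (M.1) $A_p^2\le A_{p-1}A_{p+1}$, (M.2) $A_p\le c_0H^p\min_{q\le p}A_qA_{p-q}$, (M.3)' $\sum_{p\ge1}A_{p-1}/A_p<\infty$ and (M.4) $(A_p/p!)^2\le(A_{p-1}/(p-1)!)(A_{p+1}/(p+1)!)$; $A_\alpha=A_{|\alpha|}$. $\rho\in(0,1]$ is a fixed parameter (the paper's standing choice). "Beurling case" refers to the first quantifier pattern, "Roumieu case (resp.)" to the one in parentheses; the statement holds in each case. $\langle x\rangle=(1+|x|^2)^{1/2}$. *)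

theory Defs
  imports "HOL-Analysis.Analysis"
begin

definition jbr :: "'a::real_normed_vector \<Rightarrow> real" where
  "jbr x = sqrt (1 + (norm x)\<^sup>2)"

definition pd :: "'n::finite \<Rightarrow> (real^'n \<Rightarrow> real) \<Rightarrow> real^'n \<Rightarrow> real" where
  "pd i f x = deriv (\<lambda>t. f (x + t *\<^sub>R axis i 1)) 0"

text \<open>Iterated partial derivative along a list of coordinate directions;
  for a list with count i = alpha i this is \<partial>^alpha (for smooth functions
  the order is irrelevant), and |alpha| = length.\<close>
fun pdl :: "'n::finite list \<Rightarrow> (real^'n \<Rightarrow> real) \<Rightarrow> real^'n \<Rightarrow> real" where
  "pdl [] f = f"
| "pdl (i # is) f = pd i (pdl is f)"

definition Cinf_on :: "(real^'n::finite) set \<Rightarrow> (real^'n \<Rightarrow> real) \<Rightarrow> bool" where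
  "Cinf_on S f \<longleftrightarrow> (\<forall>is. continuous_on S (pdl is f) \<and>
     (\<forall>i. \<forall>x\<in>S. (\<lambda>t. pdl is f (x + t *\<^sub>R axis i 1)) differentiable (at 0)))"

definition Cinf_on1 :: "real set \<Rightarrow> (real \<Rightarrow> real) \<Rightarrow> bool" where
  "Cinf_on1 S f \<longleftrightarrow> (\<forall>k. \<forall>t\<in>S. (deriv ^^ k) f differentiable (at t))"

end

theory Submission
  imports Defs
begin

text \<open>By induction on the order, every iterated partial derivative of \<open>b\<^sub>0 (|x|)\<close> is
  a finite sum of terms \<open>c \<cdot> b\<^sub>0\<^sup>(\<^sup>j\<^sup>)(|x|) \<cdot> \<omega>\<^sup>g \<cdot> |x|\<^sup>-\<^sup>m\<close> with \<open>j + m = n\<close>, where the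
  direction cosines \<open>\<omega>\<^sub>l = x\<^sub>l / |x|\<close> are bounded by \<open>1\<close> and the coefficients of the terms with a
  fixed \<open>j\<close> sum to at most \<open>4\<^sup>n n! / j!\<close>. On \<open>|x| > s\<close> one has
  \<open>|x|\<^sup>-\<^sup>1 \<le> (\<langle>s\<rangle> / s) \<langle>x\<rangle>\<^sup>-\<^sup>1 \<le> (\<langle>s\<rangle> / s) \<langle>x\<rangle>\<^sup>-\<^sup>\<rho>\<close>, so the estimate for \<open>\<partial>\<^sup>\<alpha>b\<close> reduces to
  \<open>4\<^sup>n h\<^sup>j K\<^sup>n\<^sup>-\<^sup>j a\<^sub>j \<le> D (h'/2)\<^sup>n a\<^sub>n\<close> for \<open>a\<^sub>p = A\<^sub>p / p!\<close>, which is log-convex by (M.4) and hence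
  increasing. In the Roumieu case this holds with \<open>h' = 8 max(h, 1) K\<close>. In the Beurling case
  (M.3)' forces \<open>a\<^sub>p\<^sub>+\<^sub>1 / a\<^sub>p \<rightarrow> \<infinity>\<close>, so that \<open>a\<^sub>j M\<^sup>n\<^sup>-\<^sup>j \<le> M\<^sup>P a\<^sub>n\<close> for every \<open>M\<close>, which
  absorbs any fixed geometric loss.\<close>

section \<open>Derivatives of radial functions\<close>

lemma has_real_derivative_norm_along_axis:
  fixes x :: "real^'n"
  assumes "x \<noteq> 0"
  shows "((\<lambda>t. norm (x + t *\<^sub>R axis i 1)) has_real_derivative x$i / norm x) (at 0)"
proof -
  have "(norm has_derivative (\<lambda>h. h \<bullet> sgn x)) (at (x + 0 *\<^sub>R axis i 1))"
    using has_derivative_norm[OF assms] by simp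
  moreover have "((\<lambda>t. x + t *\<^sub>R axis i 1) has_derivative (\<lambda>t. t *\<^sub>R axis i 1)) (at 0)"
    by (auto intro!: derivative_eq_intros)
  ultimately have "((\<lambda>t. norm (x + t *\<^sub>R axis i 1)) has_derivative (\<lambda>t. (t *\<^sub>R axis i 1) \<bullet> sgn x)) (at 0)"
    using has_derivative_compose by fastforce
  moreover have "(\<lambda>t. (t *\<^sub>R axis i (1::real)) \<bullet> sgn x) = (*) (x$i / norm x)"
    by (rule ext) (simp add: cart_eq_inner_axis sgn_div_norm inner_commute field_simps)
  ultimately show ?thesis
    unfolding has_field_derivative_def by simp
qed

lemma has_real_derivative_dircos_along_axis:
  fixes x :: "real^'n"
  assumes "x \<noteq> 0"
  shows "((\<lambda>t. (x + t *\<^sub>R axis i 1)$l / norm (x + t *\<^sub>R axis i 1)) has_real_derivative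
           ((if l = i then 1 else 0) - x$l / norm x * (x$i / norm x)) / norm x) (at 0)"
proof -
  have "((\<lambda>t. (x + t *\<^sub>R axis i 1)$l) has_real_derivative (if l = i then 1 else 0)) (at 0)"
    by (auto simp: axis_def intro!: derivative_eq_intros)
  from DERIV_divide[OF this has_real_derivative_norm_along_axis[OF assms]] show ?thesis
    by (rule DERIV_cong) (use assms in \<open>auto simp: field_simps power2_eq_square\<close>)
qed

definition dircos_monomial :: "real^'n \<Rightarrow> 'n list \<Rightarrow> real" where
  "dircos_monomial x g = (\<Prod>l\<leftarrow>g. x$l / norm x)"

definition dircos_poly :: "real^'n \<Rightarrow> (real \<times> 'n list) list \<Rightarrow> real" where
  "dircos_poly x L = (\<Sum>(c, g)\<leftarrow>L. c * dircos_monomial x g)"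

text \<open>The derivative \<open>\<partial>\<^sub>i (x\<^sub>l / |x|) = (\<delta>\<^sub>i\<^sub>l - x\<^sub>i x\<^sub>l / |x|\<^sup>2) / |x|\<close> turns
  \<open>|x| \<partial>\<^sub>i\<close> of a monomial in the direction cosines into a polynomial in them.\<close>
fun dircos_monomial_deriv :: "'n \<Rightarrow> 'n list \<Rightarrow> (real \<times> 'n list) list" where
  "dircos_monomial_deriv i [] = []"
| "dircos_monomial_deriv i (l # g) =
     (if l = i then [(1, g)] else []) @ (-1, i # l # g)
       # map (\<lambda>(c, g'). (c, l # g')) (dircos_monomial_deriv i g)"

lemma dircos_poly_Nil [simp]: "dircos_poly x [] = 0"
  and dircos_poly_Cons [simp]: "dircos_poly x ((c, g) # L) = c * dircos_monomial x g + dircos_poly x L"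
  and dircos_poly_append [simp]: "dircos_poly x (L1 @ L2) = dircos_poly x L1 + dircos_poly x L2"
  by (simp_all add: dircos_poly_def)

lemma dircos_poly_map_Cons:
  "dircos_poly x (map (\<lambda>(c, g). (c, l # g)) L) = x$l / norm x * dircos_poly x L"
  by (induct L) (auto simp: dircos_poly_def dircos_monomial_def algebra_simps)

lemma has_real_derivative_dircos_monomial:
  fixes x :: "real^'n"
  assumes "x \<noteq> 0"
  shows "((\<lambda>t. dircos_monomial (x + t *\<^sub>R axis i 1) g) has_real_derivative
           dircos_poly x (dircos_monomial_deriv i g) / norm x) (at 0)"
proof (induct g)
  case Nil
  then show ?case by (simp add: dircos_monomial_def)
next
  case (Cons l g)
  have "((\<lambda>t. (x + t *\<^sub>R axis i 1)$l / norm (x + t *\<^sub>R axis i 1)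
           * dircos_monomial (x + t *\<^sub>R axis i 1) g) has_real_derivative
          dircos_poly x (dircos_monomial_deriv i (l # g)) / norm x) (at 0)"
    using DERIV_mult[OF has_real_derivative_dircos_along_axis[OF assms] Cons]
    by (rule DERIV_cong) (use assms in \<open>simp add: dircos_poly_map_Cons dircos_monomial_def field_simps\<close>)
  then show ?case
    by (simp add: dircos_monomial_def)
qed

type_synonym 'n radial_term = "real \<times> nat \<times> 'n list \<times> nat"

definition radial_term_val :: "(real \<Rightarrow> real) \<Rightarrow> real^'n \<Rightarrow> 'n radial_term \<Rightarrow> real" where
  "radial_term_val b0 x \<tau> = (case \<tau> of (c, j, g, m) \<Rightarrow>
     c * (deriv ^^ j) b0 (norm x) * dircos_monomial x g * (1 / norm x) ^ m)"

definition radial_sum :: "(real \<Rightarrow> real) \<Rightarrow> real^'n \<Rightarrow> 'n radial_term list \<Rightarrow> real" where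
  "radial_sum b0 x T = (\<Sum>\<tau>\<leftarrow>T. radial_term_val b0 x \<tau>)"

lemma radial_sum_Nil [simp]: "radial_sum b0 x [] = 0"
  and radial_sum_Cons [simp]: "radial_sum b0 x (\<tau> # T) = radial_term_val b0 x \<tau> + radial_sum b0 x T"
  and radial_sum_append [simp]: "radial_sum b0 x (T1 @ T2) = radial_sum b0 x T1 + radial_sum b0 x T2"
  by (simp_all add: radial_sum_def)

lemma radial_sum_map_dircos:
  "radial_sum b0 x (map (\<lambda>(c', g). (c * c', j, g, m)) L)
     = c * (deriv ^^ j) b0 (norm x) * (1 / norm x) ^ m * dircos_poly x L"
  by (induct L) (auto simp: radial_term_val_def algebra_simps)

fun radial_term_deriv :: "'n \<Rightarrow> 'n radial_term \<Rightarrow> 'n radial_term list" where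
  "radial_term_deriv i (c, j, g, m) =
     (c, Suc j, i # g, m) # (- (c * real m), j, i # g, Suc m)
       # map (\<lambda>(c', g'). (c * c', j, g', Suc m)) (dircos_monomial_deriv i g)"

fun radial_expansion :: "'n list \<Rightarrow> 'n radial_term list" where
  "radial_expansion [] = [(1, 0, [], 0)]"
| "radial_expansion (i # js) = concat (map (radial_term_deriv i) (radial_expansion js))"

lemma has_real_derivative_inverse_norm_power_along_axis:
  fixes x :: "real^'n"
  assumes "x \<noteq> 0"
  shows "((\<lambda>t. (1 / norm (x + t *\<^sub>R axis i 1)) ^ m) has_real_derivative
           - (real m * (x$i / norm x) * (1 / norm x) ^ Suc m)) (at 0)"
proof -
  have "norm x \<noteq> 0" using assms by simp
  have "((\<lambda>t. 1 / norm (x + t *\<^sub>R axis i 1)) has_real_derivative - (x$i / norm x * (1 / norm x)\<^sup>2)) (at 0)"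
    by (rule DERIV_cong[OF DERIV_divide[OF DERIV_const has_real_derivative_norm_along_axis[OF assms]]])
      (use \<open>norm x \<noteq> 0\<close> in \<open>simp_all add: field_simps power2_eq_square\<close>)
  from DERIV_power[OF this] show ?thesis
    by (rule DERIV_cong) (use \<open>norm x \<noteq> 0\<close> in \<open>cases m, simp_all add: field_simps power2_eq_square\<close>)
qed

lemma has_real_derivative_radial_profile_along_axis:
  fixes x :: "real^'n"
  assumes "x \<noteq> 0" and "(deriv ^^ j) b0 differentiable (at (norm x))"
  shows "((\<lambda>t. (deriv ^^ j) b0 (norm (x + t *\<^sub>R axis i 1))) has_real_derivative
           (deriv ^^ Suc j) b0 (norm x) * (x$i / norm x)) (at 0)"
proof -
  have "((deriv ^^ j) b0 has_real_derivative (deriv ^^ Suc j) b0 (norm x)) (at (norm (x + 0 *\<^sub>R axis i 1)))"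
    using assms(2) by (simp add: DERIV_deriv_iff_real_differentiable)
  from DERIV_chain2[OF this has_real_derivative_norm_along_axis[OF assms(1)]] show ?thesis .
qed

lemma has_real_derivative_radial_term_along_axis:
  fixes x :: "real^'n"
  assumes "x \<noteq> 0" and "\<And>k. (deriv ^^ k) b0 differentiable (at (norm x))"
  shows "((\<lambda>t. radial_term_val b0 (x + t *\<^sub>R axis i 1) \<tau>) has_real_derivative
           radial_sum b0 x (radial_term_deriv i \<tau>)) (at 0)"
proof -
  obtain c j g m where \<tau>: "\<tau> = (c, j, g, m)" by (cases \<tau>) auto
  note dprofile = has_real_derivative_radial_profile_along_axis[OF assms, of j i]
  note dmonomial = has_real_derivative_dircos_monomial[OF assms(1), of i g]
  note dpower = has_real_derivative_inverse_norm_power_along_axis[OF assms(1), of i m]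
  have "((\<lambda>t. c * (deriv ^^ j) b0 (norm (x + t *\<^sub>R axis i 1)) * dircos_monomial (x + t *\<^sub>R axis i 1) g
           * (1 / norm (x + t *\<^sub>R axis i 1)) ^ m) has_real_derivative
          radial_sum b0 x (radial_term_deriv i \<tau>)) (at 0)"
    using DERIV_mult[OF DERIV_mult[OF DERIV_cmult[OF dprofile, of c] dmonomial] dpower]
    by (rule DERIV_cong)
      (use assms(1) in \<open>simp only: \<tau> radial_term_deriv.simps radial_sum_Cons radial_sum_map_dircos,
        simp add: radial_term_val_def dircos_monomial_def algebra_simps\<close>)
  then show ?thesis by (simp add: \<tau> radial_term_val_def)
qed

lemma has_real_derivative_radial_sum_along_axis:
  fixes x :: "real^'n"
  assumes "x \<noteq> 0" and "\<And>k. (deriv ^^ k) b0 differentiable (at (norm x))"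
  shows "((\<lambda>t. radial_sum b0 (x + t *\<^sub>R axis i 1) T) has_real_derivative
           radial_sum b0 x (concat (map (radial_term_deriv i) T))) (at 0)"
  by (induct T) (auto intro!: DERIV_add has_real_derivative_radial_term_along_axis assms)

lemma eventually_norm_gt_along_axis:
  fixes x :: "real^'n"
  assumes "norm x > s"
  shows "eventually (\<lambda>t. s < norm (x + t *\<^sub>R axis i 1)) (nhds 0)"
proof -
  have "open {t::real. s < norm (x + t *\<^sub>R axis i 1)}"
    by (intro open_Collect_less continuous_intros)
  with assms show ?thesis
    using eventually_nhds_in_open[of "{t::real. s < norm (x + t *\<^sub>R axis i 1)}" 0] by simp
qed

lemma Cinf_on1_differentiable:
  "Cinf_on1 S f \<Longrightarrow> t \<in> S \<Longrightarrow> (deriv ^^ k) f differentiable (at t)"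
  by (simp add: Cinf_on1_def)

lemma has_real_derivative_along_axis_radial_expansion:
  fixes x :: "real^'n"
  assumes "s \<ge> 0" and b0: "Cinf_on1 {s<..} b0" and x: "norm x > s"
    and f: "\<And>y. norm y > s \<Longrightarrow> f y = radial_sum b0 y (radial_expansion js)"
  shows "((\<lambda>t. f (x + t *\<^sub>R axis i 1)) has_real_derivative
           radial_sum b0 x (radial_expansion (i # js))) (at 0)"
proof -
  have "x \<noteq> 0" using assms(1) x by auto
  have "eventually (\<lambda>t. f (x + t *\<^sub>R axis i 1)
          = radial_sum b0 (x + t *\<^sub>R axis i 1) (radial_expansion js)) (nhds 0)"
    using eventually_norm_gt_along_axis[OF x, of i] by (auto elim: eventually_mono intro: f)
  with has_real_derivative_radial_sum_along_axis[OF \<open>x \<noteq> 0\<close> Cinf_on1_differentiable[OF b0]]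
  show ?thesis
    using x by (auto intro: DERIV_cong_ev[THEN iffD2, OF refl _ refl])
qed

lemma pdl_radial_eq_radial_expansion:
  fixes x :: "real^'n"
  assumes "s \<ge> 0" and "Cinf_on1 {s<..} b0" and "norm x > s"
  shows "pdl js (\<lambda>x. b0 (norm x)) x = radial_sum b0 x (radial_expansion js)"
  using assms(3)
proof (induct js arbitrary: x)
  case Nil
  then show ?case by (simp add: radial_term_val_def dircos_monomial_def)
next
  case (Cons i js)
  from has_real_derivative_along_axis_radial_expansion[OF assms(1,2) Cons.prems Cons.hyps]
  show ?case
    by (simp add: pd_def DERIV_imp_deriv)
qed

lemma isCont_dircos_monomial: "x \<noteq> 0 \<Longrightarrow> isCont (\<lambda>x. dircos_monomial x g) (x::real^'n)"
  by (induct g) (auto simp: dircos_monomial_def intro!: continuous_intros)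

lemma isCont_radial_sum:
  fixes x :: "real^'n"
  assumes "x \<noteq> 0" and "\<And>k. (deriv ^^ k) b0 differentiable (at (norm x))"
  shows "isCont (\<lambda>x. radial_sum b0 x T) x"
proof (induct T)
  case Nil
  then show ?case by simp
next
  case (Cons \<tau> T)
  obtain c j g m where \<tau>: "\<tau> = (c, j, g, m)" by (cases \<tau>) auto
  have "isCont ((deriv ^^ j) b0) (norm x)"
    using assms(2) by (rule differentiable_imp_continuous_within)
  then have "isCont (\<lambda>x. (deriv ^^ j) b0 (norm x)) x"
    by (rule isCont_o2[rotated]) (intro continuous_intros)
  with assms(1) have "isCont (\<lambda>x. radial_term_val b0 x \<tau>) x"
    by (auto simp: \<tau> radial_term_val_def intro!: continuous_intros isCont_dircos_monomial)
  with Cons show ?case by simp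
qed

lemma Cinf_on_radial:
  assumes "s \<ge> 0" and b0: "Cinf_on1 {s<..} b0"
  shows "Cinf_on {x::real^'n. norm x > s} (\<lambda>x. b0 (norm x))"
  unfolding Cinf_on_def
proof (intro allI conjI ballI)
  fix js :: "'n list"
  have "continuous_on {x::real^'n. norm x > s} (\<lambda>x. radial_sum b0 x (radial_expansion js))"
    using assms by (intro continuous_at_imp_continuous_on ballI isCont_radial_sum)
      (auto intro: Cinf_on1_differentiable)
  then show "continuous_on {x::real^'n. norm x > s} (pdl js (\<lambda>x. b0 (norm x)))"
    by (rule continuous_on_cong[THEN iffD1, rotated 2])
      (simp_all add: pdl_radial_eq_radial_expansion[OF assms])
next
  fix js :: "'n list" and i and x :: "real^'n"
  assume "x \<in> {x. norm x > s}"
  with has_real_derivative_along_axis_radial_expansion[OF assms, of x "pdl js (\<lambda>x. b0 (norm x))" js i]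
  show "(\<lambda>t. pdl js (\<lambda>x. b0 (norm x)) (x + t *\<^sub>R axis i 1)) differentiable at 0"
    using pdl_radial_eq_radial_expansion[OF assms] real_differentiable_def by auto
qed

section \<open>Size of the coefficients\<close>

lemma length_dircos_monomial_deriv:
  "(c, g') \<in> set (dircos_monomial_deriv i g) \<Longrightarrow> length g' \<le> Suc (length g)"
  by (induct g arbitrary: c g') auto

lemma sum_abs_coeff_dircos_monomial_deriv:
  "(\<Sum>(c, g')\<leftarrow>dircos_monomial_deriv i g. \<bar>c\<bar>) \<le> 2 * real (length g)"
proof (induct g)
  case Nil
  then show ?case by simp
next
  case (Cons l g)
  have "(\<Sum>(c, g')\<leftarrow>map (\<lambda>(c, g'). (c, l # g')) L. \<bar>c\<bar>) = (\<Sum>(c, g')\<leftarrow>L. \<bar>c\<bar>)"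
    for L :: "(real \<times> 'a list) list"
    by (induct L) auto
  with Cons show ?case by auto
qed

lemma radial_expansion_orders:
  "(c, j, g, m) \<in> set (radial_expansion js) \<Longrightarrow> j + m = length js \<and> length g \<le> length js"
proof (induct js arbitrary: c j g m)
  case Nil
  then show ?case by simp
next
  case (Cons i js)
  then obtain c0 j0 g0 m0 where "(c0, j0, g0, m0) \<in> set (radial_expansion js)"
    and "(c, j, g, m) \<in> set (radial_term_deriv i (c0, j0, g0, m0))"
    by auto
  with Cons.hyps length_dircos_monomial_deriv[of _ _ i g0] show ?case
    by fastforce
qed

lemma sum_list_map_concat: "sum_list (map f (concat xss)) = (\<Sum>xs\<leftarrow>xss. sum_list (map f xs))"
  by (induct xss) auto

definition term_weight :: "(nat \<Rightarrow> real) \<Rightarrow> 'n radial_term \<Rightarrow> real" where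
  "term_weight F \<tau> = (case \<tau> of (c, j, g, m) \<Rightarrow> \<bar>c\<bar> * F j)"

lemma term_weight_radial_term_deriv_le:
  assumes F: "\<And>j. F j \<ge> 0" and "j + m = n" "length g \<le> n"
  shows "(\<Sum>\<sigma>\<leftarrow>radial_term_deriv i (c, j, g, m). term_weight F \<sigma>) \<le> \<bar>c\<bar> * (F (Suc j) + 3 * real n * F j)"
proof -
  have map_dircos: "(\<Sum>\<sigma>\<leftarrow>map (\<lambda>(c', g'). (c * c', j, g', Suc m)) L. term_weight F \<sigma>)
      = \<bar>c\<bar> * F j * (\<Sum>(c', g')\<leftarrow>L. \<bar>c'\<bar>)" for L :: "(real \<times> 'n list) list"
    by (induct L) (auto simp: term_weight_def abs_mult algebra_simps)
  have "(\<Sum>\<sigma>\<leftarrow>radial_term_deriv i (c, j, g, m). term_weight F \<sigma>)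
      = \<bar>c\<bar> * F (Suc j) + \<bar>c\<bar> * real m * F j
        + \<bar>c\<bar> * F j * (\<Sum>(c', g')\<leftarrow>dircos_monomial_deriv i g. \<bar>c'\<bar>)"
    by (simp only: radial_term_deriv.simps list.map sum_list.Cons map_dircos)
      (simp add: term_weight_def abs_mult)
  also have "\<dots> \<le> \<bar>c\<bar> * F (Suc j) + \<bar>c\<bar> * real n * F j + \<bar>c\<bar> * F j * (2 * real n)"
    using sum_abs_coeff_dircos_monomial_deriv[of i g] assms
    by (intro add_mono mult_left_mono mult_right_mono order_refl) auto
  finally show ?thesis
    by (simp add: algebra_simps)
qed

definition radial_coeff_bound :: "nat \<Rightarrow> nat \<Rightarrow> real" where
  "radial_coeff_bound n j = 4 ^ n * fact n / fact j"

lemma radial_coeff_bound_step: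
  assumes F: "\<And>j. F j \<ge> 0"
  shows "(\<Sum>j\<le>n. radial_coeff_bound n j * (F (Suc j) + 3 * real n * F j))
           \<le> (\<Sum>j\<le>Suc n. radial_coeff_bound (Suc n) j * F j)"
proof -
  have k_nonneg: "radial_coeff_bound n j \<ge> 0" for j
    by (simp add: radial_coeff_bound_def)
  have "(\<Sum>j\<le>n. radial_coeff_bound n j * F (Suc j)) = (\<Sum>j\<le>Suc n. real j * radial_coeff_bound n j * F j)"
    by (subst sum.atMost_Suc_shift) (simp add: radial_coeff_bound_def fact_Suc del: of_nat_Suc)
  moreover have "(\<Sum>j\<le>n. radial_coeff_bound n j * (3 * real n * F j))
      \<le> (\<Sum>j\<le>Suc n. radial_coeff_bound n j * (3 * real n * F j))"
    using F k_nonneg by simp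
  ultimately have "(\<Sum>j\<le>n. radial_coeff_bound n j * (F (Suc j) + 3 * real n * F j))
      \<le> (\<Sum>j\<le>Suc n. (real j + 3 * real n) * (radial_coeff_bound n j * F j))"
    by (simp add: algebra_simps sum.distrib)
  also have "\<dots> \<le> (\<Sum>j\<le>Suc n. 4 * real (Suc n) * (radial_coeff_bound n j * F j))"
    using F k_nonneg by (intro sum_mono mult_right_mono) auto
  also have "\<dots> = (\<Sum>j\<le>Suc n. radial_coeff_bound (Suc n) j * F j)"
    by (rule sum.cong[OF refl]) (simp add: radial_coeff_bound_def algebra_simps)
  finally show ?thesis .
qed

lemma term_weight_radial_expansion_le:
  assumes "\<And>j. F j \<ge> 0"
  shows "(\<Sum>\<tau>\<leftarrow>radial_expansion js. term_weight F \<tau>)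
           \<le> (\<Sum>j\<le>length js. radial_coeff_bound (length js) j * F j)"
  using assms
proof (induct js arbitrary: F)
  case Nil
  then show ?case by (simp add: term_weight_def radial_coeff_bound_def)
next
  case (Cons i js)
  define n where "n = length js"
  define G where "G j = F (Suc j) + 3 * real n * F j" for j
  have G_nonneg: "G j \<ge> 0" for j
    using Cons.prems by (simp add: G_def)
  have "(\<Sum>\<tau>\<leftarrow>radial_expansion (i # js). term_weight F \<tau>)
      = (\<Sum>\<tau>\<leftarrow>radial_expansion js. \<Sum>\<sigma>\<leftarrow>radial_term_deriv i \<tau>. term_weight F \<sigma>)"
    by (simp only: radial_expansion.simps sum_list_map_concat map_map o_def)
  also have "\<dots> \<le> (\<Sum>\<tau>\<leftarrow>radial_expansion js. term_weight G \<tau>)"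
  proof (rule sum_list_mono)
    fix \<tau> assume "\<tau> \<in> set (radial_expansion js)"
    moreover obtain c j g m where \<tau>: "\<tau> = (c, j, g, m)" by (cases \<tau>)
    ultimately have "j + m = n" "length g \<le> n"
      by (auto simp: n_def dest: radial_expansion_orders)
    from term_weight_radial_term_deriv_le[OF Cons.prems this]
    show "(\<Sum>\<sigma>\<leftarrow>radial_term_deriv i \<tau>. term_weight F \<sigma>) \<le> term_weight G \<tau>"
      by (simp add: \<tau> term_weight_def G_def)
  qed
  also have "\<dots> \<le> (\<Sum>j\<le>n. radial_coeff_bound n j * G j)"
    using Cons.hyps[OF G_nonneg] by (simp add: n_def)
  also have "\<dots> \<le> (\<Sum>j\<le>Suc n. radial_coeff_bound (Suc n) j * F j)"
    unfolding G_def by (rule radial_coeff_bound_step[OF Cons.prems])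
  finally show ?case
    by (simp add: n_def)
qed

lemma abs_dircos_monomial_le_1:
  fixes x :: "real^'n"
  shows "\<bar>dircos_monomial x g\<bar> \<le> 1"
proof -
  have dircos: "\<bar>x$l / norm x\<bar> \<le> 1" for l
    using component_le_norm_cart[of x l] by (cases "x = 0") (auto simp: abs_div)
  show ?thesis
    unfolding dircos_monomial_def
    by (induct g) (simp_all only: prod_list.Nil prod_list.Cons list.map abs_one abs_mult order_refl
        mult_le_one[OF dircos abs_ge_zero])
qed

lemma abs_pdl_radial_le:
  fixes x :: "real^'n"
  assumes "s \<ge> 0" and "Cinf_on1 {s<..} b0" and x: "norm x > s"
  shows "\<bar>pdl js (\<lambda>x. b0 (norm x)) x\<bar> \<le> (\<Sum>j\<le>length js. radial_coeff_bound (length js) j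
           * (\<bar>(deriv ^^ j) b0 (norm x)\<bar> * (1 / norm x) ^ (length js - j)))"
proof -
  define F where "F j = \<bar>(deriv ^^ j) b0 (norm x)\<bar> * (1 / norm x) ^ (length js - j)" for j
  have "\<bar>pdl js (\<lambda>x. b0 (norm x)) x\<bar> = \<bar>\<Sum>\<tau>\<leftarrow>radial_expansion js. radial_term_val b0 x \<tau>\<bar>"
    using pdl_radial_eq_radial_expansion[OF assms] by (simp add: radial_sum_def)
  also have "\<dots> \<le> (\<Sum>\<tau>\<leftarrow>radial_expansion js. \<bar>radial_term_val b0 x \<tau>\<bar>)"
    using sum_list_abs[of "map (radial_term_val b0 x) (radial_expansion js)"] by (simp add: o_def)
  also have "\<dots> \<le> (\<Sum>\<tau>\<leftarrow>radial_expansion js. term_weight F \<tau>)"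
  proof (rule sum_list_mono)
    fix \<tau> assume "\<tau> \<in> set (radial_expansion js)"
    moreover obtain c j g m where \<tau>: "\<tau> = (c, j, g, m)" by (cases \<tau>)
    ultimately have m: "m = length js - j"
      using radial_expansion_orders by fastforce
    have "\<bar>radial_term_val b0 x \<tau>\<bar>
        = \<bar>c\<bar> * \<bar>(deriv ^^ j) b0 (norm x)\<bar> * (1 / norm x) ^ m * \<bar>dircos_monomial x g\<bar>"
      by (simp add: \<tau> radial_term_val_def abs_mult power_abs)
    also have "\<dots> \<le> \<bar>c\<bar> * \<bar>(deriv ^^ j) b0 (norm x)\<bar> * (1 / norm x) ^ m"
      using abs_dircos_monomial_le_1[of x g] by (intro mult_right_le_one_le) auto
    finally show "\<bar>radial_term_val b0 x \<tau>\<bar> \<le> term_weight F \<tau>"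
      by (simp add: \<tau> term_weight_def F_def m)
  qed
  also have "\<dots> \<le> (\<Sum>j\<le>length js. radial_coeff_bound (length js) j * F j)"
    by (rule term_weight_radial_expansion_le) (simp add: F_def)
  finally show ?thesis
    by (simp add: F_def)
qed

section \<open>Weight sequences\<close>

lemma log_convex_ratio_incseq:
  fixes a :: "nat \<Rightarrow> real"
  assumes pos: "\<And>p. a p > 0" and log_convex: "\<And>p. (a (Suc p))\<^sup>2 \<le> a p * a (Suc (Suc p))"
  shows "incseq (\<lambda>p. a (Suc p) / a p)"
proof (rule incseq_SucI)
  fix p
  have "a (Suc p) / a p = (a (Suc p))\<^sup>2 / (a p * a (Suc p))"
    using pos[of "Suc p"] by (simp add: power2_eq_square)
  also have "\<dots> \<le> a p * a (Suc (Suc p)) / (a p * a (Suc p))"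
    using pos[of p] pos[of "Suc p"] log_convex[of p] by (intro divide_right_mono) auto
  also have "\<dots> = a (Suc (Suc p)) / a (Suc p)"
    using pos[of p] by simp
  finally show "a (Suc p) / a p \<le> a (Suc (Suc p)) / a (Suc p)" .
qed

lemma log_convex_mono:
  fixes a :: "nat \<Rightarrow> real"
  assumes pos: "\<And>p. a p > 0" and "\<And>p. (a (Suc p))\<^sup>2 \<le> a p * a (Suc (Suc p))" and "a 0 \<le> a 1"
  shows "mono a"
proof (rule incseq_SucI)
  fix p
  have "1 \<le> a 1 / a 0"
    using pos[of 0] assms(3) by simp
  also have "\<dots> \<le> a (Suc p) / a p"
    using incseqD[OF log_convex_ratio_incseq[of a, OF assms(1,2)], of 0 p] by simp
  finally show "a p \<le> a (Suc p)"
    using pos[of p] by (simp add: le_divide_eq)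
qed

text \<open>If the ratios \<open>a (Suc p) / a p\<close> stayed below \<open>M\<close>, the summands would dominate the
  harmonic series \<open>1 / (M (p + 1))\<close>.\<close>
lemma summable_imp_ratio_eventually_ge:
  fixes a :: "nat \<Rightarrow> real"
  assumes pos: "\<And>p. a p > 0" and inc: "incseq (\<lambda>p. a (Suc p) / a p)"
    and summable: "summable (\<lambda>p. a p / (a (Suc p) * real (Suc p)))" and "M > 0"
  shows "\<exists>P. \<forall>p\<ge>P. M * a p \<le> a (Suc p)"
proof (rule ccontr)
  assume "\<nexists>P. \<forall>p\<ge>P. M * a p \<le> a (Suc p)"
  have "a (Suc q) / a q < M" for q
  proof -
    obtain p where "p \<ge> q" "a (Suc p) < M * a p"
      using \<open>\<nexists>P. _\<close> by (auto simp: not_le)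
    then have "a (Suc p) / a p < M"
      using pos[of p] by (simp add: divide_less_eq)
    with incseqD[OF inc \<open>p \<ge> q\<close>] show ?thesis
      by simp
  qed
  then have "norm (1 / (M * real (Suc q))) \<le> a q / (a (Suc q) * real (Suc q))" for q
    using pos[of q] pos[of "Suc q"] \<open>M > 0\<close> by (simp add: divide_simps less_imp_le mult.commute)
  then have "summable (\<lambda>q. M * (1 / (M * real (Suc q))))"
    by (intro summable_mult summable_comparison_test'[OF summable]) auto
  then have "summable (\<lambda>q. 1 / real (Suc q))"
    using \<open>M > 0\<close> by simp
  then show False
    using not_summable_harmonic[where 'a=real] summable_Suc_iff[of "\<lambda>n. 1 / real n"] by (simp add: inverse_eq_divide)
qed

lemma geometric_growth_from:
  fixes a :: "nat \<Rightarrow> real"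
  assumes "\<forall>p\<ge>P. M * a p \<le> a (Suc p)" and "M \<ge> 0" and "p \<ge> P"
  shows "M ^ k * a p \<le> a (p + k)"
proof (induct k)
  case 0
  then show ?case by simp
next
  case (Suc k)
  have "M ^ Suc k * a p = M * (M ^ k * a p)" by simp
  also have "\<dots> \<le> M * a (p + k)" using Suc \<open>M \<ge> 0\<close> by (rule mult_left_mono)
  also have "\<dots> \<le> a (p + Suc k)" using assms by simp
  finally show ?case .
qed

lemma shifted_power_le:
  fixes a :: "nat \<Rightarrow> real"
  assumes pos: "\<And>p. a p > 0" and "mono a" and growth: "\<forall>p\<ge>P. M * a p \<le> a (Suc p)"
    and "M \<ge> 1" and "j \<le> n"
  shows "a j * M ^ (n - j) \<le> M ^ P * a n"
proof (cases "max j P \<le> n")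
  case True
  define q where "q = max j P"
  have "a j * M ^ (n - j) = M ^ (q - j) * (M ^ (n - q) * a j)"
    using True \<open>j \<le> n\<close> by (simp add: q_def power_add[symmetric])
  also have "\<dots> \<le> M ^ (q - j) * (M ^ (n - q) * a q)"
    using \<open>mono a\<close> \<open>M \<ge> 1\<close> by (simp add: q_def monoD)
  also have "\<dots> \<le> M ^ (q - j) * a n"
    using geometric_growth_from[OF growth, of q "n - q"] True \<open>M \<ge> 1\<close> by (simp add: q_def)
  also have "\<dots> \<le> M ^ P * a n"
    using pos[of n] \<open>M \<ge> 1\<close> by (intro mult_right_mono power_increasing) (auto simp: q_def)
  finally show ?thesis .
next
  case False
  then have "n - j \<le> P"
    using \<open>j \<le> n\<close> by (auto simp: max_def split: if_splits)
  have "a j * M ^ (n - j) \<le> a n * M ^ P"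
    using \<open>mono a\<close> \<open>j \<le> n\<close> \<open>M \<ge> 1\<close> pos[of n]
    by (intro mult_mono power_increasing \<open>n - j \<le> P\<close>) (auto simp: monoD)
  then show ?thesis by (simp add: mult.commute)
qed

lemma power_rescale:
  fixes h K :: real
  assumes "h > 0" and "j \<le> n"
  shows "4 ^ n * (h / 8) ^ j * K ^ (n - j) = (h / 2) ^ n * (8 * K / h) ^ (n - j)"
proof -
  obtain k where n: "n = j + k"
    using \<open>j \<le> n\<close> le_Suc_ex by blast
  have "(h / 2) ^ n * (8 * K / h) ^ (n - j) = (h / 2) ^ j * ((h / 2) * (8 * K / h)) ^ k"
    by (simp only: n diff_add_inverse power_add power_mult_distrib mult_ac)
  also have "\<dots> = (4 * (h / 8)) ^ j * (4 * K) ^ k"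
    using \<open>h > 0\<close> by simp
  also have "\<dots> = 4 ^ n * (h / 8) ^ j * K ^ (n - j)"
    by (simp only: n diff_add_inverse power_add power_mult_distrib mult_ac)
  finally show ?thesis
    by (rule sym)
qed

lemma Beurling_shift_bound:
  fixes a :: "nat \<Rightarrow> real"
  assumes pos: "\<And>p. a p > 0" and "mono a" and "incseq (\<lambda>p. a (Suc p) / a p)"
    and "summable (\<lambda>p. a p / (a (Suc p) * real (Suc p)))" and "K \<ge> 0" and "h > 0"
  shows "\<exists>D>0. \<forall>n j. j \<le> n \<longrightarrow> 4 ^ n * (h / 8) ^ j * K ^ (n - j) * a j \<le> D * (h / 2) ^ n * a n"
proof -
  define M where "M = max 1 (8 * K / h)"
  have "M \<ge> 1" by (simp add: M_def)
  then obtain P where growth: "\<forall>p\<ge>P. M * a p \<le> a (Suc p)"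
    using summable_imp_ratio_eventually_ge[OF pos assms(3,4), of M] by auto
  show ?thesis
  proof (intro exI conjI allI impI)
    show "M ^ P > 0" using \<open>M \<ge> 1\<close> by simp
    fix n j :: nat
    assume "j \<le> n"
    have "4 ^ n * (h / 8) ^ j * K ^ (n - j) * a j = (h / 2) ^ n * ((8 * K / h) ^ (n - j) * a j)"
      using power_rescale[OF \<open>h > 0\<close> \<open>j \<le> n\<close>] by simp
    also have "\<dots> \<le> (h / 2) ^ n * (M ^ (n - j) * a j)"
      using assms by (intro mult_left_mono mult_right_mono power_mono) (auto simp: M_def less_imp_le)
    also have "\<dots> \<le> (h / 2) ^ n * (M ^ P * a n)"
      using shifted_power_le[OF pos \<open>mono a\<close> growth \<open>M \<ge> 1\<close> \<open>j \<le> n\<close>] \<open>h > 0\<close>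
      by (simp add: mult.commute)
    finally show "4 ^ n * (h / 8) ^ j * K ^ (n - j) * a j \<le> M ^ P * (h / 2) ^ n * a n"
      by (simp add: algebra_simps)
  qed
qed

lemma Roumieu_shift_bound:
  fixes a :: "nat \<Rightarrow> real"
  assumes "\<And>p. a p > 0" and "mono a" and "h > 0" and "K \<ge> 1" and "j \<le> n"
  shows "4 ^ n * h ^ j * K ^ (n - j) * a j \<le> (4 * max h 1 * K) ^ n * a n"
proof -
  have "h ^ j \<le> max h 1 ^ n"
    using assms by (intro order_trans[OF power_mono power_increasing]) auto
  moreover have "K ^ (n - j) \<le> K ^ n"
    using \<open>K \<ge> 1\<close> by (intro power_increasing) auto
  moreover have "a j \<le> a n"
    using \<open>mono a\<close> \<open>j \<le> n\<close> by (rule monoD)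
  ultimately have "4 ^ n * h ^ j * K ^ (n - j) * a j \<le> 4 ^ n * max h 1 ^ n * K ^ n * a n"
    using assms by (intro mult_mono) (auto intro: less_imp_le)
  then show ?thesis
    by (simp add: power_mult_distrib)
qed

lemma one_le_jbr: "1 \<le> jbr x"
  by (simp add: jbr_def)

lemma jbr_norm: "jbr (norm x) = jbr x"
  by (simp add: jbr_def)

lemma abs_le_jbr: "\<bar>t\<bar> \<le> jbr (t::real)"
  unfolding jbr_def by (rule real_le_rsqrt) simp

lemma inverse_le_jbr_ratio:
  fixes r s :: real
  assumes "0 < s" "s < r"
  shows "1 / r \<le> jbr s / s / jbr r"
proof -
  have "(1 + r\<^sup>2) * s\<^sup>2 \<le> (1 + s\<^sup>2) * r\<^sup>2"
    using power_strict_mono[OF \<open>s < r\<close>, of 2] assms by (simp add: algebra_simps)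
  then have "jbr r * s \<le> jbr s * r"
    using real_sqrt_le_mono assms by (fastforce simp: jbr_def real_sqrt_mult)
  then show ?thesis
    using assms one_le_jbr[of r] by (simp add: divide_simps mult.commute)
qed

lemma inverse_power_le_jbr_powr:
  fixes r s \<rho> :: real
  assumes "0 < s" "s < r" "0 < \<rho>" "\<rho> \<le> 1"
  shows "(1 / r) ^ k \<le> (jbr s / s) ^ k * jbr r powr (- \<rho> * real k)"
proof -
  have "(1 / r) ^ k \<le> (jbr s / s / jbr r) ^ k"
    using assms by (intro power_mono inverse_le_jbr_ratio) auto
  also have "\<dots> = (jbr s / s) ^ k * jbr r powr (- real k)"
    using one_le_jbr[of r] by (simp add: powr_minus powr_realpow divide_inverse power_mult_distrib power_inverse)
  also have "\<dots> \<le> (jbr s / s) ^ k * jbr r powr (- \<rho> * real k)"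
    using assms one_le_jbr[of r] one_le_jbr[of s]
    by (intro mult_left_mono powr_mono) (auto simp: mult_left_le_one_le)
  finally show ?thesis .
qed

section \<open>Ultradifferentiable estimates\<close>

definition deriv_estimate ::
    "(nat \<Rightarrow> real) \<Rightarrow> real \<Rightarrow> (real \<Rightarrow> real) \<Rightarrow> real \<Rightarrow> (real \<Rightarrow> real) \<Rightarrow> real \<Rightarrow> real \<Rightarrow> bool" where
  "deriv_estimate A \<rho> g0 s b0 h C \<longleftrightarrow> (\<forall>t>s. \<forall>k.
     \<bar>(deriv ^^ k) b0 t\<bar> \<le> C * h ^ k * A k * g0 t * jbr t powr (- \<rho> * real k))"

definition pdl_estimate ::
    "(nat \<Rightarrow> real) \<Rightarrow> real \<Rightarrow> (real \<Rightarrow> real) \<Rightarrow> real \<Rightarrow> (real^'n \<Rightarrow> real) \<Rightarrow> real \<Rightarrow> real \<Rightarrow> bool" where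
  "pdl_estimate A \<rho> g0 s b h C \<longleftrightarrow> (\<forall>x. norm x > s \<longrightarrow> (\<forall>js.
     \<bar>pdl js b x\<bar> \<le> C * h ^ length js * A (length js) * g0 (norm x)
                         * jbr x powr (- \<rho> * real (length js))))"

locale radial_profile =
  fixes A :: "nat \<Rightarrow> real" and \<rho> s :: real and g0 b0 :: "real \<Rightarrow> real"
  assumes s_pos: "s > 0" and b0_smooth: "Cinf_on1 {s<..} b0"
    and rho_pos: "0 < \<rho>" and rho_le_1: "\<rho> \<le> 1"
    and A_pos: "\<And>p. A p > 0" and A01: "A 0 = 1" "A 1 = 1"
    and log_convex: "\<And>p. (A (Suc p) / fact (Suc p))\<^sup>2 \<le> A p / fact p * (A (Suc (Suc p)) / fact (Suc (Suc p)))"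
    and g0_pos: "\<And>t. t > 0 \<Longrightarrow> g0 t > 0"
begin

lemma g0_nonneg: "t > s \<Longrightarrow> g0 t \<ge> 0"
  using s_pos g0_pos[of t] by simp

lemma weight_pos: "A p / fact p > 0"
  using A_pos[of p] by simp

lemma weight_mono: "mono (\<lambda>p. A p / fact p)"
  using log_convex_mono[of "\<lambda>p. A p / fact p", OF weight_pos log_convex] A01 by simp

lemma weight_ratio_incseq: "incseq (\<lambda>p. (A (Suc p) / fact (Suc p)) / (A p / fact p))"
  using log_convex_ratio_incseq[of "\<lambda>p. A p / fact p", OF weight_pos log_convex] .

lemma jbr_ratio_ge_1: "jbr s / s \<ge> 1"
  using abs_le_jbr[of s] s_pos by simp

text \<open>In \<open>key\<close> the factor \<open>4\<^sup>n\<close> absorbs \<open>radial_coeff_bound\<close>, and the factor \<open>2\<^sup>n\<close> hidden in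
  \<open>h' / 2\<close> pays for the \<open>n + 1\<close> summands.\<close>
lemma pdl_estimate_radial:
  assumes "C \<ge> 0" "D \<ge> 0" "h' > 0"
    and estimate: "deriv_estimate A \<rho> g0 s b0 h C"
    and key: "\<And>n j. j \<le> n \<Longrightarrow>
      4 ^ n * h ^ j * (jbr s / s) ^ (n - j) * (A j / fact j) \<le> D * (h' / 2) ^ n * (A n / fact n)"
  shows "pdl_estimate A \<rho> g0 s (\<lambda>x::real^'n. b0 (norm x)) h' (C * D)"
  unfolding pdl_estimate_def
proof (intro allI impI)
  fix x :: "real^'n" and js :: "'n list"
  assume x: "norm x > s"
  define n r J where "n = length js" and "r = norm x" and "J = jbr r"
  define Q where "Q = C * D * (h' / 2) ^ n * A n * g0 r * J powr (- \<rho> * real n)"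
  have Q_nonneg: "Q \<ge> 0"
    using \<open>C \<ge> 0\<close> \<open>D \<ge> 0\<close> \<open>h' > 0\<close> A_pos[of n] g0_nonneg[OF x] by (simp add: Q_def r_def)
  have term_le: "radial_coeff_bound n j * (\<bar>(deriv ^^ j) b0 r\<bar> * (1 / r) ^ (n - j)) \<le> Q"
    if "j \<le> n" for j
  proof -
    have est_j: "\<bar>(deriv ^^ j) b0 r\<bar> \<le> C * h ^ j * A j * g0 r * J powr (- \<rho> * real j)"
      using estimate x by (simp add: deriv_estimate_def r_def J_def)
    have "radial_coeff_bound n j * (\<bar>(deriv ^^ j) b0 r\<bar> * (1 / r) ^ (n - j))
        \<le> radial_coeff_bound n j * ((C * h ^ j * A j * g0 r * J powr (- \<rho> * real j))
            * ((jbr s / s) ^ (n - j) * J powr (- \<rho> * real (n - j))))"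
      using est_j order_trans[OF abs_ge_zero est_j] x
        inverse_power_le_jbr_powr[OF s_pos _ rho_pos rho_le_1, of r "n - j"]
      by (intro mult_left_mono mult_mono) (auto simp: radial_coeff_bound_def r_def J_def)
    also have "\<dots> = C * g0 r * (J powr (- \<rho> * real j) * J powr (- \<rho> * real (n - j))) * fact n
        * (4 ^ n * h ^ j * (jbr s / s) ^ (n - j) * (A j / fact j))"
      by (simp add: radial_coeff_bound_def)
    also have "J powr (- \<rho> * real j) * J powr (- \<rho> * real (n - j)) = J powr (- \<rho> * real n)"
      using \<open>j \<le> n\<close> by (simp add: powr_add[symmetric] of_nat_diff algebra_simps)
    also have "C * g0 r * J powr (- \<rho> * real n) * fact n * (4 ^ n * h ^ j * (jbr s / s) ^ (n - j) * (A j / fact j))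
        \<le> C * g0 r * J powr (- \<rho> * real n) * fact n * (D * (h' / 2) ^ n * (A n / fact n))"
      using \<open>C \<ge> 0\<close> g0_nonneg[of r] x by (intro mult_left_mono key that) (simp_all add: r_def)
    also have "\<dots> = Q"
      by (simp add: Q_def)
    finally show ?thesis .
  qed
  have "\<bar>pdl js (\<lambda>x. b0 (norm x)) x\<bar>
      \<le> (\<Sum>j\<le>n. radial_coeff_bound n j * (\<bar>(deriv ^^ j) b0 r\<bar> * (1 / r) ^ (n - j)))"
    using abs_pdl_radial_le[OF _ b0_smooth x] s_pos by (simp add: n_def r_def)
  also have "\<dots> \<le> real (Suc n) * Q"
    using sum_mono[of "{..n}", OF term_le] by simp
  also have "\<dots> \<le> 2 ^ n * Q"
  proof (rule mult_right_mono[OF _ Q_nonneg])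
    show "real (Suc n) \<le> 2 ^ n"
      using less_exp[of n] by (metis Suc_leI of_nat_le_iff of_nat_numeral of_nat_power)
  qed
  also have "\<dots> = C * D * h' ^ n * A n * g0 (norm x) * jbr x powr (- \<rho> * real n)"
    by (simp add: Q_def J_def r_def jbr_norm power_divide)
  finally show "\<bar>pdl js (\<lambda>x. b0 (norm x)) x\<bar> \<le> C * D * h' ^ length js * A (length js) * g0 (norm x)
                  * jbr x powr (- \<rho> * real (length js))"
    by (simp add: n_def)
qed

lemma Roumieu_case:
  assumes "\<exists>h>0. \<exists>C>0. deriv_estimate A \<rho> g0 s b0 h C"
  shows "\<exists>h>0. \<exists>C>0. pdl_estimate A \<rho> g0 s (\<lambda>x::real^'n. b0 (norm x)) h C"
proof -
  obtain h C where "h > 0" "C > 0" and estimate: "deriv_estimate A \<rho> g0 s b0 h C"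
    using assms by blast
  define h' where "h' = 8 * max h 1 * (jbr s / s)"
  have "h' > 0"
    unfolding h'_def using jbr_ratio_ge_1 by (intro mult_pos_pos) auto
  have "h' / 2 = 4 * max h 1 * (jbr s / s)"
    by (simp add: h'_def)
  then have "4 ^ n * h ^ j * (jbr s / s) ^ (n - j) * (A j / fact j) \<le> 1 * (h' / 2) ^ n * (A n / fact n)"
    if "j \<le> n" for n j
    unfolding mult_1_left by (simp only: Roumieu_shift_bound[OF weight_pos weight_mono \<open>h > 0\<close> jbr_ratio_ge_1 that])
  with \<open>C > 0\<close> \<open>h' > 0\<close> have "pdl_estimate A \<rho> g0 s (\<lambda>x::real^'n. b0 (norm x)) h' (C * 1)"
    by (intro pdl_estimate_radial[OF _ _ _ estimate]) auto
  with \<open>h' > 0\<close> \<open>C > 0\<close> show ?thesis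
    by auto
qed

lemma Beurling_case:
  assumes "summable (\<lambda>p. A p / A (Suc p))"
    and "\<forall>h>0. \<exists>C>0. deriv_estimate A \<rho> g0 s b0 h C"
  shows "\<forall>h>0. \<exists>C>0. pdl_estimate A \<rho> g0 s (\<lambda>x::real^'n. b0 (norm x)) h C"
proof (intro allI impI)
  fix h' :: real
  assume "h' > 0"
  obtain C where "C > 0" and estimate: "deriv_estimate A \<rho> g0 s b0 (h' / 8) C"
    using assms(2) \<open>h' > 0\<close> by (metis divide_pos_pos zero_less_numeral)
  have "A p / A (Suc p) = A p / fact p / (A (Suc p) / fact (Suc p) * real (Suc p))" for p
    using A_pos[of "Suc p"] by (simp add: fact_Suc divide_simps del: of_nat_Suc)
  then have "summable (\<lambda>p. A p / fact p / (A (Suc p) / fact (Suc p) * real (Suc p)))"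
    using assms(1) by simp
  moreover have "jbr s / s \<ge> 0"
    using jbr_ratio_ge_1 by simp
  ultimately obtain D where "D > 0" and key: "\<forall>n j. j \<le> n \<longrightarrow>
      4 ^ n * (h' / 8) ^ j * (jbr s / s) ^ (n - j) * (A j / fact j) \<le> D * (h' / 2) ^ n * (A n / fact n)"
    using Beurling_shift_bound[OF weight_pos weight_mono weight_ratio_incseq _ _ \<open>h' > 0\<close>] by blast
  have "pdl_estimate A \<rho> g0 s (\<lambda>x::real^'n. b0 (norm x)) h' (C * D)"
    using \<open>C > 0\<close> \<open>D > 0\<close> \<open>h' > 0\<close> estimate key by (intro pdl_estimate_radial) auto
  with \<open>C > 0\<close> \<open>D > 0\<close> show "\<exists>C>0. pdl_estimate A \<rho> g0 s (\<lambda>x::real^'n. b0 (norm x)) h' C"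
    by (intro exI[of _ "C * D"]) simp
qed

end

theorem lemma5p9:
  fixes A :: "nat \<Rightarrow> real" and \<rho> s :: real
    and g0 b0 :: "real \<Rightarrow> real"
  assumes A_pos: "\<forall>p. A p > 0"
    and A01: "A 0 = 1" "A 1 = 1"
    and M1: "\<forall>p\<ge>1. (A p)\<^sup>2 \<le> A (p - 1) * A (p + 1)"
    and M2: "\<exists>c0 H. \<forall>p. \<forall>q\<le>p. A p \<le> c0 * H ^ p * (A q * A (p - q))"
    and M3': "summable (\<lambda>p. A p / A (Suc p))"
    and M4: "\<forall>p\<ge>1. (A p / fact p)\<^sup>2 \<le> (A (p - 1) / fact (p - 1)) * (A (p + 1) / fact (p + 1))"
    and rho: "0 < \<rho>" "\<rho> \<le> 1"
    and g0_pos: "\<forall>t>0. g0 t > 0"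
    and g0_cont: "continuous_on {0<..} g0"
    and s_pos: "s > 0"
    and b0_smooth: "Cinf_on1 {s<..} b0"
  shows
    "((\<forall>h>0. \<exists>C>0. \<forall>t>s. \<forall>k.
         \<bar>(deriv ^^ k) b0 t\<bar> \<le> C * h ^ k * A k * g0 t * jbr t powr (- \<rho> * real k))
      \<longrightarrow> Cinf_on {x::real^'n. norm x > s} (\<lambda>x. b0 (norm x))
        \<and> (\<forall>h>0. \<exists>C>0. \<forall>x::real^'n. norm x > s \<longrightarrow> (\<forall>js.
              \<bar>pdl js (\<lambda>x. b0 (norm x)) x\<bar>
                \<le> C * h ^ length js * A (length js) * g0 (norm x)
                  * jbr x powr (- \<rho> * real (length js)))))
   \<and> ((\<exists>h>0. \<exists>C>0. \<forall>t>s. \<forall>k.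
         \<bar>(deriv ^^ k) b0 t\<bar> \<le> C * h ^ k * A k * g0 t * jbr t powr (- \<rho> * real k))
      \<longrightarrow> Cinf_on {x::real^'n. norm x > s} (\<lambda>x. b0 (norm x))
        \<and> (\<exists>h>0. \<exists>C>0. \<forall>x::real^'n. norm x > s \<longrightarrow> (\<forall>js.
              \<bar>pdl js (\<lambda>x. b0 (norm x)) x\<bar>
                \<le> C * h ^ length js * A (length js) * g0 (norm x)
                  * jbr x powr (- \<rho> * real (length js)))))"
proof -
  interpret radial_profile A \<rho> s g0 b0
  proof
    show "(A (Suc p) / fact (Suc p))\<^sup>2 \<le> A p / fact p * (A (Suc (Suc p)) / fact (Suc (Suc p)))" for p
      using M4[rule_format, of "Suc p"] by simp
  qed (use A_pos A01 rho g0_pos s_pos b0_smooth in auto)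
  have "Cinf_on {x::real^'n. norm x > s} (\<lambda>x. b0 (norm x))"
    using s_pos b0_smooth by (intro Cinf_on_radial) auto
  with Beurling_case[OF M3', where 'n='n] Roumieu_case[where 'n='n] show ?thesis
    unfolding deriv_estimate_def pdl_estimate_def by blast
qed

end
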